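(* Let $\omega\in\Omega_+$. If \[\liminf_{K\to\infty}\frac1K\sum_{x=0}^{K-1}\delta^x(\omega)<1,\] then $0$ is $\omega$-recurrent.
   Context: Cookie environments: $\Omega_+=([1/2,1]^{\mathbb N})^{\mathbb Z}$. $P_{x,\omega}$ is the law of the nearest-neighbor process $(X_n)_{n\ge0}$ with $X_0=x$ which, on its $i$-th visit to site $z$, jumps to $z+1$ with probability $\omega(z,i)$ and to $z-1$ otherwise. $\delta^x(\omega)=\sum_{i\ge1}(2\omega(x,i)-1)\in[0,\infty]$. $R_k=\{X_n=k\text{ i.o.}\}$; a site $y$ is $\omega$-recurrent if $P_{x,\omega}[R_y]=1$ for all $x\in\mathbb Z$. *)

theory Defs
  imports "HOL-Probability.Probability"
begin

text \<open>Cookie environments: omega z i is the probability of jumping right on the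
  i-th visit (i >= 1) to site z.  Index i = 0 is unused.\<close>

definition cookie_env :: "(int \<Rightarrow> nat \<Rightarrow> real) \<Rightarrow> bool" where
  "cookie_env \<omega> \<longleftrightarrow> (\<forall>z i. i \<ge> 1 \<longrightarrow> 1/2 \<le> \<omega> z i \<and> \<omega> z i \<le> 1)"

text \<open>Independent coin flips c (z,i), true with probability omega z i;
  the walk uses coin c (z,i) on its i-th visit to z (cookie-stack construction).\<close>

definition coins :: "(int \<Rightarrow> nat \<Rightarrow> real) \<Rightarrow> (int \<times> nat \<Rightarrow> bool) measure" where
  "coins \<omega> = PiM UNIV (\<lambda>(z, i). measure_pmf (bernoulli_pmf (\<omega> z i)))"

text \<open>State at time n: current position and number of visits made strictly before time n
  to each site.\<close>

primrec walk_state :: "(int \<times> nat \<Rightarrow> bool) \<Rightarrow> int \<Rightarrow> nat \<Rightarrow> int \<times> (int \<Rightarrow> nat)" where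
  "walk_state c x 0 = (x, (\<lambda>_. 0))"
| "walk_state c x (Suc n) =
     (let (p, v) = walk_state c x n; i = Suc (v p)
      in (if c (p, i) then p + 1 else p - 1, v(p := i)))"

definition walk :: "(int \<times> nat \<Rightarrow> bool) \<Rightarrow> int \<Rightarrow> nat \<Rightarrow> int" where
  "walk c x n = fst (walk_state c x n)"

definition drift :: "(int \<Rightarrow> nat \<Rightarrow> real) \<Rightarrow> int \<Rightarrow> ennreal" where
  "drift \<omega> x = (\<Sum>i. ennreal (2 * \<omega> x (Suc i) - 1))"

definition recurrent_site :: "(int \<Rightarrow> nat \<Rightarrow> real) \<Rightarrow> int \<Rightarrow> bool" where
  "recurrent_site \<omega> y \<longleftrightarrow>
     (\<forall>x. measure (coins \<omega>) {c \<in> space (coins \<omega>). \<forall>N. \<exists>n\<ge>N. walk c x n = y} = 1)"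

end

theory Submission
  imports Defs
begin

(* Write escape h for the probability that the walk continued from the history h never
   visits 0. Stopped on leaving an interval (a, b), the walk is a submartingale whose
   compensator collects the drifts 2 omega - 1 of the cookies eaten inside (a, b); since each
   cookie is eaten at most once, the compensator is at most the sum of delta^y over a < y < b.
   The squared distance to a grows by at least 1 per step inside (a, b), so the probability of
   still being inside at time m is at most (b - a)^2 / m. Optional stopping then gives the
   gambler's-ruin bounds: from x < 0 the walk leaves (-L, 0) through -L with probability at most
   |x| / L, so escape vanishes left of 0; from 0 < x < K it leaves (0, K) through K with
   probability at most (x + sum of delta^y over 0 < y < K) / K. If s is the supremum of escape
   over histories ending right of 0, the Markov property at the exit time bounds escape from x by
   s times that probability; choosing K along the subsequence on which the average drift stays
   below some r < 1 gives s <= s (1 + r) / 2, so s = 0. Thus the walk returns to 0 almost surely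
   after every history, and as there are only countably many histories it returns infinitely
   often. *)

section \<open>Paths\<close>

definition cookie_index :: "int list \<Rightarrow> int \<times> nat" where
  "cookie_index g = (last g, Suc (count_list (butlast g) (last g)))"

definition next_site :: "(int \<times> nat \<Rightarrow> bool) \<Rightarrow> int list \<Rightarrow> int" where
  "next_site c g = (if c (cookie_index g) then last g + 1 else last g - 1)"

(* The visits recorded in the history h have already eaten their cookies. *)
primrec run :: "(int \<times> nat \<Rightarrow> bool) \<Rightarrow> int list \<Rightarrow> nat \<Rightarrow> int list" where
  "run c h 0 = h"
| "run c h (Suc n) = run c h n @ [next_site c (run c h n)]"

primrec extensions :: "int list \<Rightarrow> nat \<Rightarrow> int list set" where
  "extensions h 0 = {h}"
| "extensions h (Suc n) =
     (\<lambda>g. g @ [last g + 1]) ` extensions h n \<union> (\<lambda>g. g @ [last g - 1]) ` extensions h n"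

lemma finite_extensions: "finite (extensions h n)"
  by (induction n) auto

lemma extensions_append: "g \<in> extensions h n \<Longrightarrow> \<exists>t. g = h @ t \<and> length t = n"
  by (induction n arbitrary: g) fastforce+

lemma length_extensions: "g \<in> extensions h n \<Longrightarrow> length g = length h + n"
  using extensions_append by fastforce

lemma extensions_nonempty: "h \<noteq> [] \<Longrightarrow> g \<in> extensions h n \<Longrightarrow> g \<noteq> []"
  using extensions_append[of g h n] by auto

lemma run_in_extensions: "run c h n \<in> extensions h n"
  by (induction n) (auto simp: next_site_def)

lemma run_add: "run c h (n + m) = run c (run c h n) m"
  by (induction m) auto

lemma count_list_butlast:
  "g \<noteq> [] \<Longrightarrow> count_list g z = count_list (butlast g) z + (if z = last g then 1 else 0)"
  by (induction g) auto

lemma walk_state_run: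
  "walk_state c x n = (last (run c [x] n), count_list (butlast (run c [x] n)))"
proof (induction n)
  case (Suc n)
  define g where "g = run c [x] n"
  have "g \<noteq> []"
    unfolding g_def using extensions_nonempty[OF _ run_in_extensions] by simp
  then have "count_list g =
             (count_list (butlast g))(last g := Suc (count_list (butlast g) (last g)))"
    by (auto simp: fun_eq_iff count_list_butlast)
  with Suc show ?case
    by (simp add: g_def[symmetric] next_site_def cookie_index_def fun_upd_def)
qed (simp add: fun_eq_iff)

lemma walk_eq_last_run: "walk c x n = last (run c [x] n)"
  unfolding walk_def walk_state_run by simp

definition visited :: "int list \<Rightarrow> int list \<Rightarrow> int list" where
  "visited h g = drop (length h - 1) g"

lemma visited_snoc: "g \<in> extensions h n \<Longrightarrow> visited h (g @ [y]) = visited h g @ [y]"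
  unfolding visited_def by (simp add: length_extensions)

lemma visited_self: "h \<noteq> [] \<Longrightarrow> visited h h = [last h]"
  unfolding visited_def by (cases h rule: rev_cases) auto

lemma last_in_visited:
  assumes "h \<noteq> []" "length h \<le> length g"
  shows "last g \<in> set (visited h g)"
proof -
  have "length h - 1 < length g"
    using assms by (cases h) auto
  then show ?thesis
    unfolding visited_def using last_in_set[of "drop (length h - 1) g"] by auto
qed

lemma visited_extend:
  assumes "h \<noteq> []" "g \<in> extensions h m" "g' \<in> extensions g k"
  shows "set (visited h g') = set (visited h g) \<union> set (visited g g')"
proof -
  obtain t where t: "g' = g @ t"
    using extensions_append[OF assms(3)] by blast
  have "length h \<le> length g"
    using length_extensions[OF assms(2)] by simp
  moreover have "g \<noteq> []"
    using extensions_nonempty[OF assms(1,2)] .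
  ultimately have "visited h g' = visited h g @ t" "visited g g' = last g # t"
    "last g \<in> set (visited h g)"
    using assms(1) last_in_visited visited_self[OF \<open>g \<noteq> []\<close>] unfolding visited_def t by auto
  then show ?thesis
    by auto
qed

lemma visited_run: "h \<noteq> [] \<Longrightarrow> visited h (run c h k) = map (\<lambda>n. last (run c h n)) [0..<Suc k]"
proof (induction k)
  case (Suc k)
  then show ?case
    using visited_snoc[OF run_in_extensions] by simp
qed (simp add: visited_self)

lemma count_list_take_mono: "k \<le> k' \<Longrightarrow> count_list (take k xs) z \<le> count_list (take k' xs) z"
  by (metis take_add le_add_diff_inverse count_list_append le_add1)

lemma cookie_index_take_neq:
  assumes "1 \<le> k" "k < k'" "k' \<le> length g"
  shows "cookie_index (take k g) \<noteq> cookie_index (take k' g)"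
proof
  assume eq: "cookie_index (take k g) = cookie_index (take k' g)"
  define z where "z = last (take k g)"
  have "take k g \<noteq> []"
    using assms by (cases g) auto
  then have "Suc (count_list (butlast (take k g)) z) = count_list (take k g) z"
    by (simp add: count_list_butlast z_def)
  also have "\<dots> \<le> count_list (take (k' - 1) g) z"
    using assms by (intro count_list_take_mono) simp
  also have "\<dots> = count_list (butlast (take k' g)) z"
    using assms by (simp add: butlast_take)
  finally have "Suc (count_list (butlast (take k g)) z) \<le> count_list (butlast (take k' g)) z" .
  moreover have "count_list (butlast (take k' g)) z = count_list (butlast (take k g)) z"
    using eq unfolding cookie_index_def z_def by (metis prod.inject Suc_inject)
  ultimately show False
    by simp
qed

lemma inj_on_cookie_index_take: "inj_on (\<lambda>k. cookie_index (take k g)) {1..length g}"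
  by (rule inj_onI) (metis atLeastAtMost_iff cookie_index_take_neq linorder_neqE_nat)

lemma cylinder_insert:
  assumes "k \<notin> F"
  shows "{c. \<forall>j\<in>F. c j = B j} \<inter> {c. c k = b} = {c. \<forall>j\<in>insert k F. c j = (B(k := b)) j}"
proof -
  have "\<forall>j\<in>F. (B(k := b)) j = B j"
    using assms by auto
  then show ?thesis
    by auto
qed

lemma run_Suc_eq_snoc:
  assumes "y = last g + 1 \<or> y = last g - 1"
  shows "{c. run c h (Suc n) = g @ [y]} =
         {c. run c h n = g} \<inter> {c. c (cookie_index g) = (y = last g + 1)}"
proof (intro set_eqI iffI)
  fix c
  assume "c \<in> {c. run c h (Suc n) = g @ [y]}"
  then have "run c h n = g" "next_site c g = y"
    by auto
  then show "c \<in> {c. run c h n = g} \<inter> {c. c (cookie_index g) = (y = last g + 1)}"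
    by (auto simp: next_site_def split: if_splits)
next
  fix c
  assume "c \<in> {c. run c h n = g} \<inter> {c. c (cookie_index g) = (y = last g + 1)}"
  then show "c \<in> {c. run c h (Suc n) = g @ [y]}"
    using assms by (auto simp: next_site_def)
qed

section \<open>Paths stopped on leaving an interval\<close>

definition inside :: "int \<Rightarrow> int \<Rightarrow> int list \<Rightarrow> int list \<Rightarrow> bool" where
  "inside a b h g \<longleftrightarrow> (\<forall>y\<in>set (visited h g). a < y \<and> y < b)"

definition stopped :: "int \<Rightarrow> int \<Rightarrow> int list \<Rightarrow> int list \<Rightarrow> int" where
  "stopped a b h g =
     (case find (\<lambda>y. \<not> (a < y \<and> y < b)) (visited h g) of None \<Rightarrow> last g | Some y \<Rightarrow> y)"

lemma inside_snoc:
  "g \<in> extensions h n \<Longrightarrow> inside a b h (g @ [y]) \<longleftrightarrow> inside a b h g \<and> a < y \<and> y < b"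
  unfolding inside_def by (auto simp: visited_snoc)

lemma stopped_inside: "inside a b h g \<Longrightarrow> stopped a b h g = last g"
  unfolding inside_def stopped_def by (simp add: find_None_iff[THEN iffD2])

lemma stopped_snoc:
  assumes "g \<in> extensions h n"
  shows "stopped a b h (g @ [y]) = (if inside a b h g then y else stopped a b h g)"
proof -
  have find_snoc: "find P (xs @ [y]) =
      (case find P xs of None \<Rightarrow> if P y then Some y else None | Some x \<Rightarrow> Some x)"
    for P and xs :: "int list"
    by (induction xs) auto
  let ?outside = "\<lambda>y. \<not> (a < y \<and> y < b)"
  show ?thesis
  proof (cases "inside a b h g")
    case True
    then have "find ?outside (visited h g) = None"
      unfolding inside_def by (simp add: find_None_iff)
    with True show ?thesis
      unfolding stopped_def visited_snoc[OF assms] find_snoc by simp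
  next
    case False
    then obtain x where "find ?outside (visited h g) = Some x"
      unfolding inside_def by (cases "find ?outside (visited h g)") (auto simp: find_None_iff)
    with False show ?thesis
      unfolding stopped_def visited_snoc[OF assms] find_snoc by simp
  qed
qed

lemma stopped_in_visited:
  "h \<noteq> [] \<Longrightarrow> g \<in> extensions h n \<Longrightarrow> stopped a b h g \<in> set (visited h g)"
  by (auto simp: stopped_def find_Some_iff last_in_visited length_extensions split: option.split)

lemma stopped_exit:
  assumes "h \<noteq> []" "a < last h" "last h < b" "g \<in> extensions h n"
  shows "stopped a b h g \<in> (if inside a b h g then {a<..<b} else {a, b})"
  using assms(4)
proof (induction n arbitrary: g)
  case 0
  then have "inside a b h g"
    using assms(1-3) by (simp add: inside_def visited_self)
  with 0 show ?case
    using assms(2,3) by (simp add: stopped_inside)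
next
  case (Suc n)
  then obtain g0 y where
    g0: "g0 \<in> extensions h n" "g = g0 @ [y]" "y = last g0 + 1 \<or> y = last g0 - 1"
    by auto
  show ?case
  proof (cases "inside a b h g0")
    case True
    have "last g0 \<in> set (visited h g0)"
      using assms(1) g0(1) by (simp add: last_in_visited length_extensions)
    with True have "a < last g0" "last g0 < b"
      unfolding inside_def by auto
    with True g0 show ?thesis
      by (auto simp: stopped_snoc inside_snoc)
  next
    case False
    with Suc.IH[OF g0(1)] g0(1,2) show ?thesis
      by (simp add: stopped_snoc inside_snoc)
  qed
qed

lemma stopped_bounds:
  assumes "h \<noteq> []" "a < last h" "last h < b" "g \<in> extensions h n"
  shows "a \<le> stopped a b h g" "stopped a b h g \<le> b"
  using stopped_exit[OF assms] assms(2,3) by (auto split: if_splits)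

lemma cookie_index_take_inside:
  assumes "h \<noteq> []" "length h \<le> k" "k < length g" "inside a b h (take k g)"
  shows "cookie_index (take k g) \<in> {a<..<b} \<times> {1..length g}"
proof -
  have "last (take k g) \<in> set (visited h (take k g))"
    using assms(1-3) by (intro last_in_visited) auto
  moreover have "count_list (butlast (take k g)) z < length g" for z
    using count_le_length[of "butlast (take k g)" z] assms(3) by auto
  ultimately show ?thesis
    using assms(4) by (auto simp: inside_def cookie_index_def Suc_le_eq)
qed

definition avoids_zero :: "int list \<Rightarrow> int list \<Rightarrow> bool" where
  "avoids_zero h g \<longleftrightarrow> 0 \<notin> set (visited h g)"

lemma avoids_zero_last_pos:
  assumes "h \<noteq> []" "0 < last h" "g \<in> extensions h n" "avoids_zero h g"
  shows "0 < last g"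
  using assms(3,4)
proof (induction n arbitrary: g)
  case (Suc n)
  then obtain g0 y where
    g0: "g0 \<in> extensions h n" "g = g0 @ [y]" "y = last g0 + 1 \<or> y = last g0 - 1"
    by auto
  with Suc.prems(2) have "avoids_zero h g0" "y \<noteq> 0"
    by (auto simp: avoids_zero_def visited_snoc)
  with Suc.IH[OF g0(1)] g0 show ?case
    by auto
qed (use assms(2) in simp)

lemma enn2real_sum_le:
  fixes d :: "'a \<Rightarrow> ennreal"
  assumes "finite A" "sum d A \<le> ennreal B" "0 \<le> B"
  shows "\<forall>x\<in>A. d x \<noteq> \<infinity>" "(\<Sum>x\<in>A. enn2real (d x)) \<le> B"
proof -
  have "sum d A < \<top>"
    using assms(2) ennreal_less_top by (rule le_less_trans)
  with assms(1) show finite: "\<forall>x\<in>A. d x \<noteq> \<infinity>"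
    by (auto simp: top.not_eq_extremum)
  have "(\<Sum>x\<in>A. enn2real (d x)) = enn2real (sum d A)"
    using finite by (subst enn2real_sum) (auto simp: top.not_eq_extremum)
  also have "\<dots> \<le> B"
    using assms(2,3) by (intro enn2real_leI)
  finally show "(\<Sum>x\<in>A. enn2real (d x)) \<le> B" .
qed

lemma sum_greaterThanLessThan_int_le:
  fixes f :: "int \<Rightarrow> real"
  assumes "\<And>y. 0 \<le> f y"
  shows "(\<Sum>y\<in>{0<..<int K}. f y) \<le> (\<Sum>x<K. f (int x))"
proof -
  have "{0<..<int K} \<subseteq> int ` {..<K}"
  proof
    fix y assume "y \<in> {0<..<int K}"
    then have "nat y \<in> {..<K}" "y = int (nat y)"
      by auto
    then show "y \<in> int ` {..<K}"
      by blast
  qed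
  then have "(\<Sum>y\<in>{0<..<int K}. f y) \<le> (\<Sum>y\<in>int ` {..<K}. f y)"
    using assms by (intro sum_mono2) auto
  also have "\<dots> = (\<Sum>x<K. f (int x))"
    by (simp add: sum.reindex)
  finally show ?thesis .
qed

lemma frequently_small_average:
  fixes d :: "nat \<Rightarrow> ennreal"
  assumes "liminf (\<lambda>K. (\<Sum>x<K. d x) / of_nat K) < 1"
  obtains r :: real where "r < 1"
    "\<forall>N. \<exists>K\<ge>N. 0 < K \<and> (\<forall>x<K. d x \<noteq> \<infinity>) \<and> (\<Sum>x<K. enn2real (d x)) \<le> r * real K"
proof -
  let ?avg = "\<lambda>K. (\<Sum>x<K. d x) / of_nat K"
  have "\<not> 1 \<le> liminf ?avg"
    using assms by simp
  then obtain y where "y < 1" and "\<not> eventually (\<lambda>K. y < ?avg K) sequentially"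
    unfolding le_Liminf_iff by blast
  then have frequent: "\<forall>N. \<exists>K\<ge>N. ?avg K \<le> y"
    unfolding not_eventually frequently_sequentially by (auto simp: not_less)
  have "y < \<top>"
    using \<open>y < 1\<close> ennreal_less_top[of 1] by (metis ennreal_1 order.strict_trans)
  then obtain r where r: "0 \<le> r" "y = ennreal r"
    using less_top_ennreal by blast
  have "\<exists>K\<ge>N. 0 < K \<and> (\<forall>x<K. d x \<noteq> \<infinity>) \<and> (\<Sum>x<K. enn2real (d x)) \<le> r * real K" for N
  proof -
    obtain K where K: "max N 1 \<le> K" "?avg K \<le> y"
      using frequent by blast
    have "(of_nat K :: ennreal) / of_nat K = 1"
      using K(1) by (simp add: divide_eq_1_ennreal)
    then have "(\<Sum>x<K. d x) = ?avg K * of_nat K"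
      by (simp add: ennreal_divide_times)
    also have "\<dots> \<le> ennreal (r * real K)"
      using K(2) r by (simp add: mult_right_mono ennreal_mult ennreal_of_nat_eq_real_of_nat)
    finally have "(\<Sum>x<K. d x) \<le> ennreal (r * real K)" .
    with r(1) have "\<forall>x\<in>{..<K}. d x \<noteq> \<infinity>" "(\<Sum>x<K. enn2real (d x)) \<le> r * real K"
      using enn2real_sum_le[of "{..<K}" d "r * real K"] by simp_all
    with K(1) show ?thesis
      by (intro exI[of _ K]) auto
  qed
  moreover have "r < 1"
    using \<open>y < 1\<close> r ennreal_less_iff[OF r(1), of 1] by simp
  ultimately show ?thesis
    using that by blast
qed

lemma le_of_le_const_div_add:
  fixes x C y :: real
  assumes "\<And>m::nat. 0 < m \<Longrightarrow> x \<le> C / real m + y"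
  shows "x \<le> y"
proof (rule LIMSEQ_le_const)
  show "(\<lambda>m. C / real m + y) \<longlonglongrightarrow> y"
    using tendsto_add[OF lim_const_over_n tendsto_const] by simp
  show "\<exists>N. \<forall>m\<ge>N. x \<le> C / real m + y"
    using assms by (intro exI[of _ 1]) auto
qed

section \<open>The law of the walk\<close>

locale cookie_walk =
  fixes \<omega> :: "int \<Rightarrow> nat \<Rightarrow> real"
  assumes cookie_env: "cookie_env \<omega>"

sublocale cookie_walk \<subseteq> prob_space "coins \<omega>"
  unfolding coins_def
  by (rule prob_space_PiM) (auto simp: split_beta intro: measure_pmf.prob_space_axioms)

context cookie_walk
begin

abbreviation M :: "(int \<times> nat \<Rightarrow> bool) measure" where
  "M \<equiv> coins \<omega>"

lemma space_coins [simp]: "space M = UNIV"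
  unfolding coins_def space_PiM by (auto simp: split_beta)

lemma measurable_coin: "(\<lambda>c. c j) \<in> measurable M (count_space UNIV)"
proof -
  have "(\<lambda>c. c j) \<in> measurable M ((\<lambda>(z, i). measure_pmf (bernoulli_pmf (\<omega> z i))) j)"
    unfolding coins_def by (rule measurable_component_singleton) simp
  then show ?thesis
    by (simp add: measurable_def split_beta)
qed

lemma measurable_run: "(\<lambda>c. run c h n) \<in> measurable M (count_space UNIV)"
proof (induction n)
  case (Suc n)
  have "(\<lambda>c. g @ [next_site c g]) \<in> measurable M (count_space UNIV)" for g
  proof -
    have "(\<lambda>b. g @ [if b then last g + 1 else last g - 1]) \<circ> (\<lambda>c. c (cookie_index g))
          \<in> measurable M (count_space UNIV)"
      by (rule measurable_comp[OF measurable_coin]) simp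
    then show ?thesis
      by (simp add: o_def next_site_def)
  qed
  from measurable_compose_countable[OF this Suc] show ?case
    by simp
qed simp

lemma sets_run: "{c. P (run c h n)} \<in> sets M"
  using measurable_sets[OF measurable_run, of "{g. P g}" h n] by (simp add: vimage_def)

lemma sets_run_eq: "{c. run c h n = g} \<in> sets M"
  using sets_run[of "\<lambda>x. x = g"] .

lemma prob_cylinder:
  assumes "finite F"
  shows "prob {c. \<forall>j\<in>F. c j = B j} = (\<Prod>j\<in>F. pmf (bernoulli_pmf (\<omega> (fst j) (snd j))) (B j))"
proof -
  let ?Mi = "\<lambda>(z, i). measure_pmf (bernoulli_pmf (\<omega> z i))"
  have cylinder: "{c. \<forall>j\<in>F. c j = B j} = prod_emb UNIV ?Mi F (Pi\<^sub>E F (\<lambda>j. {B j}))"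
    by (auto simp: prod_emb_iff PiE_iff split_beta)
  have "emeasure M {c. \<forall>j\<in>F. c j = B j} = (\<Prod>j\<in>F. emeasure (?Mi j) {B j})"
    unfolding cylinder coins_def
    by (rule emeasure_PiM_emb) (auto simp: split_beta assms intro: measure_pmf.prob_space_axioms)
  also have "\<dots> = ennreal (\<Prod>j\<in>F. pmf (bernoulli_pmf (\<omega> (fst j) (snd j))) (B j))"
    by (simp add: split_beta emeasure_pmf_single prod_ennreal)
  finally show ?thesis
    by (simp add: measure_def prod_nonneg)
qed

(* The path event depends only on coins already used along g, so the coin of the next step,
   cookie_index g, is independent of it. *)
lemma run_event_cylinder:
  assumes "h \<noteq> []" "g \<in> extensions h n"
  shows "\<exists>F B. finite F \<and> (\<forall>j\<in>F. snd j \<le> count_list (butlast g) (fst j))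
           \<and> {c. run c h n = g} = {c. \<forall>j\<in>F. c j = B j}"
  using assms(2)
proof (induction n arbitrary: g)
  case 0
  then show ?case
    by (intro exI[of _ "{}"]) auto
next
  case (Suc n)
  then obtain g0 y where
    g0: "g0 \<in> extensions h n" "g = g0 @ [y]" "y = last g0 + 1 \<or> y = last g0 - 1"
    by auto
  obtain F B where F: "finite F" "\<forall>j\<in>F. snd j \<le> count_list (butlast g0) (fst j)"
    and event: "{c. run c h n = g0} = {c. \<forall>j\<in>F. c j = B j}"
    using Suc.IH[OF g0(1)] by blast
  have "g0 \<noteq> []"
    using extensions_nonempty[OF assms(1) g0(1)] .
  then have counts: "\<forall>j\<in>insert (cookie_index g0) F. snd j \<le> count_list g0 (fst j)"
    using F(2) count_list_butlast[of g0] by (force simp: cookie_index_def)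
  have fresh: "cookie_index g0 \<notin> F"
    using F(2) by (auto simp: cookie_index_def)
  show ?case
  proof (intro exI conjI)
    show "finite (insert (cookie_index g0) F)"
      using F(1) by simp
    show "\<forall>j\<in>insert (cookie_index g0) F. snd j \<le> count_list (butlast g) (fst j)"
      using counts g0(2) by simp
    show "{c. run c h (Suc n) = g} =
          {c. \<forall>j\<in>insert (cookie_index g0) F. c j = (B(cookie_index g0 := (y = last g0 + 1))) j}"
      unfolding g0(2) run_Suc_eq_snoc[OF g0(3)] event by (rule cylinder_insert[OF fresh])
  qed
qed

definition right_prob :: "int list \<Rightarrow> real" where
  "right_prob g = \<omega> (last g) (Suc (count_list (butlast g) (last g)))"

lemma right_prob_bounds: "1/2 \<le> right_prob g" "right_prob g \<le> 1"
  using cookie_env unfolding cookie_env_def right_prob_def by auto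

lemma cookie_drift_nonneg:
  assumes "1 \<le> i"
  shows "0 \<le> 2 * \<omega> z i - 1"
proof -
  have "1/2 \<le> \<omega> z i"
    using cookie_env assms unfolding cookie_env_def by blast
  then show ?thesis
    by simp
qed

lemma right_prob_drift_nonneg: "0 \<le> 2 * right_prob g - 1"
  unfolding right_prob_def by (rule cookie_drift_nonneg) simp

lemma prob_run_snoc:
  assumes "h \<noteq> []" "g \<in> extensions h n" "y = last g + 1 \<or> y = last g - 1"
  shows "prob {c. run c h (Suc n) = g @ [y]} =
         prob {c. run c h n = g} * (if y = last g + 1 then right_prob g else 1 - right_prob g)"
proof -
  obtain F B where F: "finite F" "\<forall>j\<in>F. snd j \<le> count_list (butlast g) (fst j)"
    and event: "{c. run c h n = g} = {c. \<forall>j\<in>F. c j = B j}"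
    using run_event_cylinder[OF assms(1,2)] by blast
  have fresh: "cookie_index g \<notin> F"
    using F(2) by (auto simp: cookie_index_def)
  let ?B' = "B(cookie_index g := (y = last g + 1))"
  let ?p = "\<lambda>j. pmf (bernoulli_pmf (\<omega> (fst j) (snd j)))"
  have "prob {c. run c h (Suc n) = g @ [y]} = prob {c. \<forall>j\<in>insert (cookie_index g) F. c j = ?B' j}"
    unfolding run_Suc_eq_snoc[OF assms(3)] event cylinder_insert[OF fresh] ..
  also have "\<dots> = (\<Prod>j\<in>insert (cookie_index g) F. ?p j (?B' j))"
    by (rule prob_cylinder) (simp add: F(1))
  also have "\<dots> = ?p (cookie_index g) (y = last g + 1) * (\<Prod>j\<in>F. ?p j (?B' j))"
    using F(1) fresh by simp
  also have "(\<Prod>j\<in>F. ?p j (?B' j)) = prob {c. run c h n = g}"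
    unfolding event prob_cylinder[OF F(1)] using fresh by (intro prod.cong) auto
  finally show ?thesis
    using right_prob_bounds[of g] by (auto simp: cookie_index_def right_prob_def)
qed

definition expect :: "int list \<Rightarrow> nat \<Rightarrow> (int list \<Rightarrow> real) \<Rightarrow> real" where
  "expect h n f = (\<Sum>g\<in>extensions h n. prob {c. run c h n = g} * f g)"

definition transition :: "(int list \<Rightarrow> real) \<Rightarrow> int list \<Rightarrow> real" where
  "transition f g = right_prob g * f (g @ [last g + 1]) + (1 - right_prob g) * f (g @ [last g - 1])"

lemma expect_0: "expect h 0 f = f h"
  using prob_space by (simp add: expect_def)

lemma expect_cong: "(\<And>g. g \<in> extensions h n \<Longrightarrow> f g = f' g) \<Longrightarrow> expect h n f = expect h n f'"
  unfolding expect_def by (intro sum.cong) auto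

lemma expect_mono: "(\<And>g. g \<in> extensions h n \<Longrightarrow> f g \<le> f' g) \<Longrightarrow> expect h n f \<le> expect h n f'"
  unfolding expect_def by (intro sum_mono mult_left_mono) auto

lemma expect_add: "expect h n (\<lambda>g. f g + f' g) = expect h n f + expect h n f'"
  unfolding expect_def by (simp add: algebra_simps sum.distrib)

lemma expect_diff: "expect h n (\<lambda>g. f g - f' g) = expect h n f - expect h n f'"
  unfolding expect_def by (simp add: algebra_simps sum_subtractf)

lemma expect_cmult: "expect h n (\<lambda>g. a * f g) = a * expect h n f"
  unfolding expect_def by (simp add: algebra_simps sum_distrib_left)

lemma tendsto_expect:
  "(\<And>g. g \<in> extensions h n \<Longrightarrow> (\<lambda>k. f k g) \<longlonglongrightarrow> l g) \<Longrightarrow> (\<lambda>k. expect h n (f k)) \<longlonglongrightarrow> expect h n l"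
  unfolding expect_def by (intro tendsto_sum tendsto_mult_left)

lemma prob_run_eq_expect: "prob {c. P (run c h n)} = expect h n (\<lambda>g. of_bool (P g))"
proof -
  let ?S = "{g \<in> extensions h n. P g}"
  have "{c. P (run c h n)} = (\<Union>g\<in>?S. {c. run c h n = g})"
    using run_in_extensions[of _ h n] by auto
  then have "prob {c. P (run c h n)} = prob (\<Union>g\<in>?S. {c. run c h n = g})"
    by simp
  also have "\<dots> = (\<Sum>g\<in>?S. prob {c. run c h n = g})"
    by (rule finite_measure_finite_Union)
      (auto simp: finite_extensions sets_run_eq disjoint_family_on_def)
  finally show ?thesis
    unfolding expect_def by (simp add: sum.inter_filter[symmetric] finite_extensions Int_def)
qed

lemma expect_const: "expect h n (\<lambda>_. a) = a"
  using prob_space prob_run_eq_expect[of "\<lambda>_. True" h n] expect_cmult[of h n a "\<lambda>_. 1"] by simp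

lemma expect_Suc:
  assumes "h \<noteq> []"
  shows "expect h (Suc n) f = expect h n (transition f)"
proof -
  let ?up = "\<lambda>g. g @ [last g + 1]" and ?down = "\<lambda>g. g @ [last g - 1]"
  have "expect h (Suc n) f = (\<Sum>g\<in>?up ` extensions h n. prob {c. run c h (Suc n) = g} * f g)
                            + (\<Sum>g\<in>?down ` extensions h n. prob {c. run c h (Suc n) = g} * f g)"
    unfolding expect_def extensions.simps
    by (rule sum.union_disjoint) (auto simp: finite_extensions)
  also have "\<dots> = (\<Sum>g\<in>extensions h n. prob {c. run c h (Suc n) = ?up g} * f (?up g))
                + (\<Sum>g\<in>extensions h n. prob {c. run c h (Suc n) = ?down g} * f (?down g))"
    by (simp add: sum.reindex inj_on_def del: run.simps)
  also have "\<dots> = (\<Sum>g\<in>extensions h n. prob {c. run c h n = g} * (right_prob g * f (?up g)))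
                + (\<Sum>g\<in>extensions h n. prob {c. run c h n = g} * ((1 - right_prob g) * f (?down g)))"
    using prob_run_snoc[OF assms]
    by (intro arg_cong2[where f = "(+)"] sum.cong) (auto simp del: run.simps)
  finally show ?thesis
    unfolding expect_def transition_def by (simp add: sum.distrib[symmetric] algebra_simps)
qed

lemma expect_tower:
  assumes "h \<noteq> []"
  shows "expect h (m + k) f = expect h m (\<lambda>g. expect g k f)"
proof (induction k arbitrary: f)
  case (Suc k)
  have "expect h (m + Suc k) f = expect h m (\<lambda>g. expect g k (transition f))"
    using expect_Suc[OF assms] Suc.IH by simp
  also have "\<dots> = expect h m (\<lambda>g. expect g (Suc k) f)"
    by (rule expect_cong) (simp add: expect_Suc[OF extensions_nonempty[OF assms]])
  finally show ?case .
qed (simp add: expect_0)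

section \<open>The stopped walk\<close>

(* The compensator of the stopped walk: the drifts of the cookies eaten before the walk leaves
   (a, b). *)
definition consumed_drift :: "int \<Rightarrow> int \<Rightarrow> int list \<Rightarrow> int list \<Rightarrow> real" where
  "consumed_drift a b h g =
     (\<Sum>k\<in>{length h..<length g}.
        if inside a b h (take k g) then 2 * right_prob (take k g) - 1 else 0)"

lemma consumed_drift_snoc:
  assumes "g \<in> extensions h n"
  shows "consumed_drift a b h (g @ [y]) =
         consumed_drift a b h g + (if inside a b h g then 2 * right_prob g - 1 else 0)"
proof -
  have "length h \<le> length g"
    using length_extensions[OF assms] by simp
  then show ?thesis
    unfolding consumed_drift_def by (simp add: sum.atLeastLessThan_Suc) (rule sum.cong; simp)
qed

lemma consumed_drift_nonneg: "0 \<le> consumed_drift a b h g"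
  unfolding consumed_drift_def using right_prob_drift_nonneg by (intro sum_nonneg) simp

lemma partial_drift_le:
  assumes "drift \<omega> y \<noteq> \<infinity>"
  shows "(\<Sum>i<N. 2 * \<omega> y (Suc i) - 1) \<le> enn2real (drift \<omega> y)"
proof -
  have nonneg: "0 \<le> (\<Sum>i<N. 2 * \<omega> y (Suc i) - 1)"
    using cookie_drift_nonneg by (simp add: sum_nonneg)
  have "ennreal (\<Sum>i<N. 2 * \<omega> y (Suc i) - 1) = (\<Sum>i<N. ennreal (2 * \<omega> y (Suc i) - 1))"
    using cookie_drift_nonneg by simp
  also have "\<dots> \<le> drift \<omega> y"
    unfolding drift_def by (rule sum_le_suminf) (auto intro: summableI)
  finally show ?thesis
    using enn2real_mono[of "ennreal (\<Sum>i<N. 2 * \<omega> y (Suc i) - 1)" "drift \<omega> y"] assms nonneg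
    by (simp add: top.not_eq_extremum)
qed

lemma consumed_drift_le:
  assumes "h \<noteq> []" and finite_drift: "\<forall>y\<in>{a<..<b}. drift \<omega> y \<noteq> \<infinity>"
  shows "consumed_drift a b h g \<le> (\<Sum>y\<in>{a<..<b}. enn2real (drift \<omega> y))"
proof -
  let ?K = "{k \<in> {length h..<length g}. inside a b h (take k g)}"
  let ?cookie = "\<lambda>k. cookie_index (take k g)"
  let ?d = "\<lambda>j. 2 * \<omega> (fst j) (snd j) - 1"
  have "1 \<le> length h"
    using assms(1) by (cases h) auto
  then have K_sub: "?K \<subseteq> {1..length g}"
    by auto
  have cookies: "?cookie ` ?K \<subseteq> {a<..<b} \<times> {1..length g}"
  proof (rule image_subsetI)
    fix k assume "k \<in> ?K"
    then show "?cookie k \<in> {a<..<b} \<times> {1..length g}"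
      by (intro cookie_index_take_inside[OF assms(1)]) auto
  qed
  have "consumed_drift a b h g = (\<Sum>k\<in>?K. ?d (?cookie k))"
    unfolding consumed_drift_def right_prob_def cookie_index_def
    by (simp add: sum.inter_filter[symmetric])
  also have "\<dots> = (\<Sum>j\<in>?cookie ` ?K. ?d j)" \<comment> \<open>each cookie is eaten at most once\<close>
    using inj_on_subset[OF inj_on_cookie_index_take K_sub] by (simp add: sum.reindex)
  also have "\<dots> \<le> (\<Sum>j\<in>{a<..<b} \<times> {1..length g}. ?d j)"
    using cookies cookie_drift_nonneg by (intro sum_mono2) auto
  also have "\<dots> = (\<Sum>y\<in>{a<..<b}. \<Sum>i\<in>{1..length g}. 2 * \<omega> y i - 1)"
    by (simp add: sum.cartesian_product split_beta)
  also have "\<dots> = (\<Sum>y\<in>{a<..<b}. \<Sum>i<length g. 2 * \<omega> y (Suc i) - 1)"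
    by (simp add: sum.atLeast1_atMost_eq)
  also have "\<dots> \<le> (\<Sum>y\<in>{a<..<b}. enn2real (drift \<omega> y))"
    using finite_drift partial_drift_le by (intro sum_mono) auto
  finally show ?thesis .
qed

lemma expect_stopped_minus_drift:
  assumes "h \<noteq> []" "a < last h" "last h < b"
  shows "expect h n (\<lambda>g. real_of_int (stopped a b h g) - consumed_drift a b h g)
         = real_of_int (last h)"
proof (induction n)
  case 0
  have "inside a b h h"
    using assms by (simp add: inside_def visited_self)
  then show ?case
    by (simp add: expect_0 stopped_inside consumed_drift_def)
next
  case (Suc n)
  let ?X = "\<lambda>g. real_of_int (stopped a b h g) - consumed_drift a b h g"
  have "transition ?X g = ?X g" if "g \<in> extensions h n" for g
    using that by (simp add: transition_def stopped_snoc consumed_drift_snoc stopped_inside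
        algebra_simps)
  then have "expect h n (transition ?X) = expect h n ?X"
    by (rule expect_cong)
  with Suc show ?case
    by (simp add: expect_Suc[OF assms(1)])
qed

lemma expect_stopped:
  assumes "h \<noteq> []" "a < last h" "last h < b"
  shows "expect h n (\<lambda>g. real_of_int (stopped a b h g))
         = real_of_int (last h) + expect h n (consumed_drift a b h)"
  using expect_add[of h n "\<lambda>g. real_of_int (stopped a b h g) - consumed_drift a b h g"
      "consumed_drift a b h"]
    expect_stopped_minus_drift[OF assms] by simp

lemma expect_stopped_ge:
  assumes "h \<noteq> []" "a < last h" "last h < b"
  shows "real_of_int (last h) \<le> expect h n (\<lambda>g. real_of_int (stopped a b h g))"
proof -
  have "expect h n (\<lambda>g. real_of_int (stopped a b h g))
        = real_of_int (last h) + expect h n (consumed_drift a b h)"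
    by (rule expect_stopped[OF assms])
  moreover have "expect h n (\<lambda>_. 0) \<le> expect h n (consumed_drift a b h)"
    by (rule expect_mono) (rule consumed_drift_nonneg)
  ultimately show ?thesis
    by (simp add: expect_const)
qed

lemma expect_stopped_le:
  assumes "h \<noteq> []" "a < last h" "last h < b" "\<forall>y\<in>{a<..<b}. drift \<omega> y \<noteq> \<infinity>"
  shows "expect h n (\<lambda>g. real_of_int (stopped a b h g))
         \<le> real_of_int (last h) + (\<Sum>y\<in>{a<..<b}. enn2real (drift \<omega> y))"
proof -
  have "expect h n (\<lambda>g. real_of_int (stopped a b h g))
        = real_of_int (last h) + expect h n (consumed_drift a b h)"
    by (rule expect_stopped[OF assms(1-3)])
  moreover have "expect h n (consumed_drift a b h)
                 \<le> expect h n (\<lambda>_. \<Sum>y\<in>{a<..<b}. enn2real (drift \<omega> y))"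
    by (rule expect_mono) (rule consumed_drift_le[OF assms(1,4)])
  ultimately show ?thesis
    by (simp add: expect_const)
qed

lemma prob_exit_lower_le:
  assumes "h \<noteq> []" "a < last h" "last h < b"
  shows "expect h n (\<lambda>g. of_bool (stopped a b h g = a))
         \<le> real_of_int (b - last h) / real_of_int (b - a)"
proof -
  let ?low = "\<lambda>g. of_bool (stopped a b h g = a) :: real"
  have "real_of_int (last h) \<le> expect h n (\<lambda>g. real_of_int (stopped a b h g))"
    by (rule expect_stopped_ge[OF assms])
  also have "\<dots> \<le> expect h n (\<lambda>g. real_of_int b - real_of_int (b - a) * ?low g)"
    using stopped_bounds[OF assms] by (intro expect_mono) auto
  also have "\<dots> = real_of_int b - real_of_int (b - a) * expect h n ?low"
    by (simp add: expect_diff expect_cmult expect_const)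
  finally show ?thesis
    using assms(2,3) by (simp add: field_simps)
qed

lemma prob_exit_upper_le:
  assumes "h \<noteq> []" "a < last h" "last h < b" "\<forall>y\<in>{a<..<b}. drift \<omega> y \<noteq> \<infinity>"
  shows "expect h n (\<lambda>g. of_bool (stopped a b h g = b))
         \<le> (real_of_int (last h - a) + (\<Sum>y\<in>{a<..<b}. enn2real (drift \<omega> y))) / real_of_int (b - a)"
proof -
  let ?up = "\<lambda>g. of_bool (stopped a b h g = b) :: real"
  have "real_of_int (b - a) * expect h n ?up = expect h n (\<lambda>g. real_of_int (b - a) * ?up g)"
    by (simp add: expect_cmult)
  also have "\<dots> \<le> expect h n (\<lambda>g. real_of_int (stopped a b h g) - real_of_int a)"
    using stopped_bounds[OF assms(1-3)] by (intro expect_mono) auto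
  also have "\<dots> \<le> real_of_int (last h - a) + (\<Sum>y\<in>{a<..<b}. enn2real (drift \<omega> y))"
    using expect_stopped_le[OF assms] by (simp add: expect_diff expect_const)
  finally show ?thesis
    using assms(2,3) by (simp add: field_simps)
qed

lemma prob_inside_antimono:
  assumes "h \<noteq> []"
  shows "antimono (\<lambda>n. expect h n (\<lambda>g. of_bool (inside a b h g)))"
proof (rule decseq_SucI)
  fix n
  have "transition (\<lambda>g. of_bool (inside a b h g)) g \<le> of_bool (inside a b h g)"
    if "g \<in> extensions h n" for g
    using that right_prob_bounds[of g] by (simp add: transition_def inside_snoc)
  then show "expect h (Suc n) (\<lambda>g. of_bool (inside a b h g))
             \<le> expect h n (\<lambda>g. of_bool (inside a b h g))"
    unfolding expect_Suc[OF assms] by (rule expect_mono)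
qed

lemma transition_stopped_square:
  assumes "h \<noteq> []" "a < last h" "last h < b" "g \<in> extensions h n"
  shows "(real_of_int (stopped a b h g - a))\<^sup>2 + of_bool (inside a b h g)
         \<le> transition (\<lambda>g. (real_of_int (stopped a b h g - a))\<^sup>2) g"
proof (cases "inside a b h g")
  case True
  then have "a < last g"
    using stopped_exit[OF assms] by (simp add: stopped_inside)
  define d where "d = real_of_int (last g - a) * (2 * right_prob g - 1)"
  have "0 \<le> d"
    unfolding d_def using \<open>a < last g\<close> right_prob_drift_nonneg by simp
  moreover have "transition (\<lambda>g. (real_of_int (stopped a b h g - a))\<^sup>2) g
                 = (real_of_int (stopped a b h g - a))\<^sup>2 + 1 + 2 * d"
    unfolding d_def using True
    by (simp add: transition_def stopped_snoc[OF assms(4)] stopped_inside power2_eq_square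
        algebra_simps)
  ultimately show ?thesis
    using True by simp
next
  case False
  then show ?thesis
    by (simp add: transition_def stopped_snoc[OF assms(4)] algebra_simps)
qed

lemma prob_inside_le:
  assumes "h \<noteq> []" "a < last h" "last h < b"
  shows "real n * expect h n (\<lambda>g. of_bool (inside a b h g)) \<le> (real_of_int (b - a))\<^sup>2"
proof -
  let ?I = "\<lambda>g. of_bool (inside a b h g) :: real"
  let ?F = "\<lambda>g. (real_of_int (stopped a b h g - a))\<^sup>2"
  have step: "expect h k ?F + expect h k ?I \<le> expect h (Suc k) ?F" for k
    unfolding expect_Suc[OF assms(1)] expect_add[symmetric]
    by (rule expect_mono) (rule transition_stopped_square[OF assms])
  have sum_le: "(\<Sum>j<k. expect h j ?I) \<le> expect h k ?F" for k
  proof (induction k)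
    case (Suc k)
    then show ?case
      using step[of k] by simp
  qed (simp add: expect_0)
  have "real n * expect h n ?I \<le> (\<Sum>j<n. expect h j ?I)"
    using sum_bounded_below[of "{..<n}" "expect h n ?I" "\<lambda>j. expect h j ?I"]
      antimonoD[OF prob_inside_antimono[OF assms(1)]] by simp
  also have "\<dots> \<le> expect h n ?F"
    by (rule sum_le)
  also have "\<dots> \<le> expect h n (\<lambda>_. (real_of_int (b - a))\<^sup>2)"
    using stopped_bounds[OF assms] by (intro expect_mono power_mono) auto
  finally show ?thesis
    by (simp add: expect_const)
qed

section \<open>Escape probabilities\<close>

definition escape :: "int list \<Rightarrow> real" where
  "escape h = prob {c. \<forall>n. last (run c h n) \<noteq> 0}"

lemma never_zero_eq:
  assumes "h \<noteq> []"
  shows "{c. \<forall>n. last (run c h n) \<noteq> 0} = (\<Inter>k. {c. avoids_zero h (run c h k)})"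
  using visited_run[OF assms] by (auto simp: avoids_zero_def less_Suc_eq_le)

lemma sets_never_zero: "h \<noteq> [] \<Longrightarrow> {c. \<forall>n. last (run c h n) \<noteq> 0} \<in> sets M"
  by (auto simp: never_zero_eq sets_run)

lemma escape_bounds: "0 \<le> escape h" "escape h \<le> 1"
  unfolding escape_def by simp_all

lemma escape_le: "h \<noteq> [] \<Longrightarrow> escape h \<le> expect h k (\<lambda>g. of_bool (avoids_zero h g))"
  unfolding escape_def never_zero_eq prob_run_eq_expect[symmetric]
  by (rule finite_measure_mono) (auto simp: sets_run)

lemma escape_tendsto:
  assumes "h \<noteq> []"
  shows "(\<lambda>k. expect h k (\<lambda>g. of_bool (avoids_zero h g))) \<longlonglongrightarrow> escape h"
  unfolding escape_def never_zero_eq[OF assms] prob_run_eq_expect[symmetric]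
proof (rule finite_Lim_measure_decseq)
  show "range (\<lambda>k. {c. avoids_zero h (run c h k)}) \<subseteq> sets M"
    by (auto simp: sets_run)
  show "decseq (\<lambda>k. {c. avoids_zero h (run c h k)})"
    by (rule decseq_SucI) (auto simp: avoids_zero_def visited_snoc[OF run_in_extensions])
qed

lemma escape_le_expect_escape:
  assumes "h \<noteq> []"
  shows "escape h \<le> expect h m (\<lambda>g. of_bool (avoids_zero h g) * escape g)"
proof -
  let ?A = "\<lambda>h g. of_bool (avoids_zero h g) :: real"
  have "escape h \<le> expect h m (\<lambda>g. ?A h g * expect g k (?A g))" for k
  proof -
    have "escape h \<le> expect h (m + k) (?A h)"
      by (rule escape_le[OF assms])
    also have "\<dots> = expect h m (\<lambda>g. expect g k (?A h))"
      by (rule expect_tower[OF assms])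
    also have "\<dots> = expect h m (\<lambda>g. ?A h g * expect g k (?A g))"
    proof (rule expect_cong)
      fix g assume g: "g \<in> extensions h m"
      have "expect g k (?A h) = expect g k (\<lambda>g'. ?A h g * ?A g g')"
        by (rule expect_cong) (auto simp: avoids_zero_def visited_extend[OF assms g])
      then show "expect g k (?A h) = ?A h g * expect g k (?A g)"
        by (simp add: expect_cmult)
    qed
    finally show ?thesis .
  qed
  moreover have "(\<lambda>k. expect h m (\<lambda>g. ?A h g * expect g k (?A g)))
                 \<longlonglongrightarrow> expect h m (\<lambda>g. ?A h g * escape g)"
    by (auto intro!: tendsto_expect tendsto_mult_left escape_tendsto
        dest: extensions_nonempty[OF assms])
  ultimately show ?thesis
    by (intro LIMSEQ_le_const) auto
qed

lemma escape_le_exit_left: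
  assumes "h \<noteq> []" "a < last h" "last h < 0" "0 < m"
  shows "escape h \<le> (real_of_int (- a))\<^sup>2 / real m + real_of_int (- last h) / real_of_int (- a)"
proof -
  let ?I = "\<lambda>g. of_bool (inside a 0 h g) :: real"
  let ?low = "\<lambda>g. of_bool (stopped a 0 h g = a) :: real"
  have "escape h \<le> expect h m (\<lambda>g. of_bool (avoids_zero h g))"
    by (rule escape_le[OF assms(1)])
  also have "\<dots> \<le> expect h m (\<lambda>g. ?I g + ?low g)"
    using stopped_exit[OF assms(1-3)] stopped_in_visited[OF assms(1), of _ m a 0]
    by (intro expect_mono) (fastforce simp: avoids_zero_def split: if_splits)
  also have "\<dots> = expect h m ?I + expect h m ?low"
    by (rule expect_add)
  also have "expect h m ?I \<le> (real_of_int (- a))\<^sup>2 / real m"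
    using prob_inside_le[OF assms(1-3), of m] assms(4) by (simp add: field_simps)
  also have "expect h m ?low \<le> real_of_int (- last h) / real_of_int (- a)"
    using prob_exit_lower_le[OF assms(1-3), of m] by simp
  finally show ?thesis
    by simp
qed

lemma escape_left:
  assumes "h \<noteq> []" "last h < 0"
  shows "escape h = 0"
proof -
  have "escape h \<le> real_of_int (- last h) / real L" if L: "- last h < int L" for L :: nat
  proof (rule le_of_le_const_div_add)
    fix m :: nat assume "0 < m"
    with L assms(2) show "escape h \<le> (real L)\<^sup>2 / real m + real_of_int (- last h) / real L"
      using escape_le_exit_left[OF assms(1), of "- int L" m] by simp
  qed
  then have "escape h \<le> 0"
    by (intro LIMSEQ_le_const[OF lim_const_over_n, of _ "real_of_int (- last h)"])
      (auto intro!: exI[of _ "nat (- last h) + 1"])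
  then show ?thesis
    using escape_bounds(1)[of h] by simp
qed

lemma avoids_zero_escape_le:
  assumes "h \<noteq> []" "0 < last h" "last h < K" "g \<in> extensions h m"
    and "0 \<le> s" "\<And>g. g \<noteq> [] \<Longrightarrow> 0 < last g \<Longrightarrow> escape g \<le> s"
  shows "of_bool (avoids_zero h g) * escape g
         \<le> of_bool (inside 0 K h g) + s * of_bool (stopped 0 K h g = K)"
proof (cases "avoids_zero h g \<and> \<not> inside 0 K h g")
  case True
  then have "stopped 0 K h g = K"
    using stopped_exit[OF assms(1-4)] stopped_in_visited[OF assms(1,4), of 0 K]
    by (auto simp: avoids_zero_def)
  moreover have "escape g \<le> s"
    using True assms(6) extensions_nonempty[OF assms(1,4)] avoids_zero_last_pos[OF assms(1,2,4)]
    by blast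
  ultimately show ?thesis
    using True by simp
next
  case False
  then show ?thesis
    using escape_bounds[of g] assms(5) by auto
qed

lemma escape_right_le:
  assumes "h \<noteq> []" "0 < last h" "last h < K"
    and finite_drift: "\<forall>y\<in>{0<..<K}. drift \<omega> y \<noteq> \<infinity>"
    and "0 \<le> s" and escape_le_s: "\<And>g. g \<noteq> [] \<Longrightarrow> 0 < last g \<Longrightarrow> escape g \<le> s"
  shows "escape h
         \<le> s * ((real_of_int (last h) + (\<Sum>y\<in>{0<..<K}. enn2real (drift \<omega> y))) / real_of_int K)"
proof -
  let ?I = "\<lambda>g. of_bool (inside 0 K h g) :: real"
  let ?up = "\<lambda>g. of_bool (stopped 0 K h g = K) :: real"
  have "escape h \<le> (real_of_int K)\<^sup>2 / real m
          + s * ((real_of_int (last h) + (\<Sum>y\<in>{0<..<K}. enn2real (drift \<omega> y))) / real_of_int K)"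
    if "0 < m" for m
  proof -
    have "escape h \<le> expect h m (\<lambda>g. of_bool (avoids_zero h g) * escape g)"
      by (rule escape_le_expect_escape[OF assms(1)])
    also have "\<dots> \<le> expect h m (\<lambda>g. ?I g + s * ?up g)"
      using avoids_zero_escape_le[OF assms(1-3) _ assms(5,6)] by (rule expect_mono)
    also have "\<dots> = expect h m ?I + s * expect h m ?up"
      by (simp add: expect_add expect_cmult)
    also have "expect h m ?I \<le> (real_of_int K)\<^sup>2 / real m"
      using prob_inside_le[OF assms(1-3), of m] \<open>0 < m\<close> by (simp add: field_simps)
    also have "s * expect h m ?up
               \<le> s * ((real_of_int (last h) + (\<Sum>y\<in>{0<..<K}. enn2real (drift \<omega> y))) / real_of_int K)"
      using prob_exit_upper_le[OF assms(1-4), of m] \<open>0 \<le> s\<close> by (intro mult_left_mono) auto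
    finally show ?thesis
      by simp
  qed
  then show ?thesis
    by (rule le_of_le_const_div_add)
qed

lemma escape_right_contract:
  assumes "r < 1"
    and freq: "\<forall>N. \<exists>K\<ge>N. 0 < K \<and> (\<forall>x<K. drift \<omega> (int x) \<noteq> \<infinity>)
                         \<and> (\<Sum>x<K. enn2real (drift \<omega> (int x))) \<le> r * real K"
    and "0 \<le> s" "\<And>g. g \<noteq> [] \<Longrightarrow> 0 < last g \<Longrightarrow> escape g \<le> s"
    and "h \<noteq> []" "0 < last h"
  shows "escape h \<le> s * ((1 + r) / 2)"
proof -
  define z where "z = last h"
  obtain K where K: "nat \<lceil>2 * real_of_int z / (1 - r)\<rceil> + nat z + 1 \<le> K" "0 < K"
    "\<forall>x<K. drift \<omega> (int x) \<noteq> \<infinity>" "(\<Sum>x<K. enn2real (drift \<omega> (int x))) \<le> r * real K"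
    using freq by blast
  have "z < int K"
    using K(1) by linarith
  have "2 * real_of_int z / (1 - r) \<le> real K"
    using K(1) by linarith
  then have z_le: "2 * real_of_int z \<le> (1 - r) * real K"
    using \<open>r < 1\<close> by (simp add: field_simps)
  have "\<forall>y\<in>{0<..<int K}. drift \<omega> y \<noteq> \<infinity>"
  proof
    fix y assume "y \<in> {0<..<int K}"
    then have "nat y < K" "y = int (nat y)"
      by auto
    then show "drift \<omega> y \<noteq> \<infinity>"
      using K(3) by metis
  qed
  then have "escape h \<le> s * ((real_of_int z + (\<Sum>y\<in>{0<..<int K}. enn2real (drift \<omega> y))) / real K)"
    using escape_right_le[OF assms(5,6) _ _ assms(3,4), where K = "int K"] \<open>z < int K\<close>
    unfolding z_def by simp
  also have "(\<Sum>y\<in>{0<..<int K}. enn2real (drift \<omega> y)) \<le> (\<Sum>x<K. enn2real (drift \<omega> (int x)))"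
    by (rule sum_greaterThanLessThan_int_le) simp
  also have "\<dots> \<le> r * real K"
    by (rule K(4))
  also have "s * ((real_of_int z + r * real K) / real K) \<le> s * ((1 + r) / 2)"
  proof -
    have "(real_of_int z + r * real K) / real K \<le> (1 + r) / 2"
      using z_le K(2) by (simp add: field_simps)
    with \<open>0 \<le> s\<close> show ?thesis
      by (rule mult_left_mono[rotated])
  qed
  finally show ?thesis
    using \<open>0 \<le> s\<close> K(2) by (simp add: divide_right_mono mult_left_mono)
qed

lemma escape_right:
  assumes "liminf (\<lambda>K::nat. (\<Sum>x<K. drift \<omega> (int x)) / of_nat K) < 1" "h \<noteq> []" "0 < last h"
  shows "escape h = 0"
proof -
  obtain r where "r < 1" and freq: "\<forall>N. \<exists>K\<ge>N. 0 < K \<and> (\<forall>x<K. drift \<omega> (int x) \<noteq> \<infinity>)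
                                     \<and> (\<Sum>x<K. enn2real (drift \<omega> (int x))) \<le> r * real K"
    using frequently_small_average[OF assms(1)] by blast
  define G where "G = {g :: int list. g \<noteq> [] \<and> 0 < last g}"
  define s where "s = (SUP g\<in>G. escape g)"
  have "bdd_above (escape ` G)"
    using escape_bounds(2) by (auto intro!: bdd_aboveI[of _ 1])
  then have le_s: "escape g \<le> s" if "g \<in> G" for g
    unfolding s_def using that by (rule cSUP_upper2) simp
  have "[1] \<in> G"
    by (simp add: G_def)
  then have "0 \<le> s"
    using le_s escape_bounds(1) order_trans by blast
  have "(SUP g\<in>G. escape g) \<le> s * ((1 + r) / 2)"
  proof (rule cSUP_least)
    show "G \<noteq> {}"
      using \<open>[1] \<in> G\<close> by blast
    fix g assume "g \<in> G"
    then show "escape g \<le> s * ((1 + r) / 2)"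
      using escape_right_contract[OF \<open>r < 1\<close> freq \<open>0 \<le> s\<close>] le_s by (auto simp: G_def)
  qed
  then have "s \<le> s * ((1 + r) / 2)"
    unfolding s_def[symmetric] .
  then have "s * (1 - (1 + r) / 2) \<le> 0"
    by (simp add: algebra_simps)
  moreover have "0 < 1 - (1 + r) / 2"
    using \<open>r < 1\<close> by simp
  ultimately have "s \<le> 0"
    by (simp add: mult_le_0_iff)
  then show ?thesis
    using le_s[of h] escape_bounds(1)[of h] assms(2,3) by (simp add: G_def)
qed

lemma escape_eq_0:
  assumes "liminf (\<lambda>K::nat. (\<Sum>x<K. drift \<omega> (int x)) / of_nat K) < 1" "h \<noteq> []"
  shows "escape h = 0"
proof (cases "last h" "0::int" rule: linorder_cases)
  case less
  then show ?thesis
    by (rule escape_left[OF assms(2)])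
next
  case equal
  then have "{c. \<forall>n. last (run c h n) \<noteq> 0} = {}"
    by (auto intro!: exI[of _ 0])
  then show ?thesis
    unfolding escape_def by (metis measure_empty)
next
  case greater
  then show ?thesis
    by (rule escape_right[OF assms])
qed

lemma never_zero_null:
  assumes "liminf (\<lambda>K::nat. (\<Sum>x<K. drift \<omega> (int x)) / of_nat K) < 1" "h \<noteq> []"
  shows "{c. \<forall>n. last (run c h n) \<noteq> 0} \<in> null_sets M"
  using sets_never_zero[OF assms(2)] escape_eq_0[OF assms]
  by (simp add: escape_def null_sets_def emeasure_eq_measure)

lemma sets_zero_infinitely_often: "{c \<in> space M. \<forall>N. \<exists>n\<ge>N. last (run c h n) = 0} \<in> sets M"
proof -
  have "{c \<in> space M. \<forall>N. \<exists>n\<ge>N. last (run c h n) = 0}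
        = (\<Inter>N. \<Union>n\<in>{N..}. {c. last (run c h n) = 0})"
    by auto
  also have "\<dots> \<in> sets M"
    using sets_run[of "\<lambda>g. last g = 0" h] by auto
  finally show ?thesis .
qed

lemma recurrence:
  assumes "liminf (\<lambda>K::nat. (\<Sum>x<K. drift \<omega> (int x)) / of_nat K) < 1"
  shows "prob {c \<in> space M. \<forall>N. \<exists>n\<ge>N. walk c x n = 0} = 1"
proof -
  let ?never = "\<lambda>g. {c. \<forall>n. last (run c g n) \<noteq> 0}"
  have null: "(\<Union>N. \<Union>g\<in>extensions [x] N. ?never g) \<in> null_sets M"
    using never_zero_null[OF assms] extensions_nonempty[of "[x]"]
    by (intro null_sets_UN null_sets_UN') (auto simp: finite_extensions countable_finite)
  have "AE c in M. \<forall>N. \<exists>n\<ge>N. last (run c [x] n) = 0"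
  proof (rule AE_I'[OF null], rule subsetI)
    fix c assume "c \<in> {c \<in> space M. \<not> (\<forall>N. \<exists>n\<ge>N. last (run c [x] n) = 0)}"
    then obtain N where "\<forall>n\<ge>N. last (run c [x] n) \<noteq> 0"
      by auto
    then have "c \<in> ?never (run c [x] N)"
      by (auto simp: run_add[symmetric])
    then show "c \<in> (\<Union>N. \<Union>g\<in>extensions [x] N. ?never g)"
      using run_in_extensions by blast
  qed
  then show ?thesis
    using prob_Collect_eq_1[of "\<lambda>c. \<forall>N. \<exists>n\<ge>N. last (run c [x] n) = 0"]
      sets_zero_infinitely_often[of "[x]"]
    by (simp add: walk_eq_last_run)
qed

end

theorem mainTheorem7:
  fixes \<omega> :: "int \<Rightarrow> nat \<Rightarrow> real"
  assumes "cookie_env \<omega>"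
    and "liminf (\<lambda>K::nat. (\<Sum>x<K. drift \<omega> (int x)) / of_nat K) < 1"
  shows "recurrent_site \<omega> 0"
proof -
  interpret cookie_walk \<omega>
    by unfold_locales (rule assms(1))
  show ?thesis
    unfolding recurrent_site_def using recurrence[OF assms(2)] by blast
qed

end
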